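(* For integers $m\ge1$ let $f_m(x)=\frac{(m-x)^{m-1}}{e^{m-x}(m-1)!}$ for $x\le m$ and $f_m(x)=0$ for $x>m$, and for integers $m\ge2$ and real $z\ge0$ let $b(m,z)$ be the unique real number with $0\le b(m,z)\le z$ and $f_m(1-z)=f_m(1+z-b(m,z))$. There is an absolute constant $C>0$ such that the following holds. Suppose $n\ge100$ is an integer, $1\le w\le\frac n{10}$, $b=b(n+1,w)$ and $0\le\xi\le1$. (i) If $h$ is an integer with $w^{3/2}\le h\le n$, then $$|f_h(1+w-b-\xi)-f_h(1-w-\xi)|\le C\Big(\frac wh+\frac{w^3}{h^2}\Big)f_h(1-w).$$ (ii) If $2\sqrt n\le w\le \frac n{10}$ and $k$ is an integer with $1\le k\le n-3w$, then each of $f_{n+1-k}(1+w-b-\xi)$ and $f_{n+1-k}(1-w-\xi)$ is of the form $$f_{n+1}(1-w)\exp\Big\{\sum_{j=n-k}^{n}\Big(\frac1{2j}\Big(1-\frac{w^2}{j}\Big)+\theta_j\,C\frac{w^3}{j^3}\Big)+\theta\,C\frac wn\Big\}$$ for some real numbers $\theta_j$ ($n-k\le j\le n$) and $\theta$ with $|\theta_j|\le1$, $|\theta|\le1$.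
   Context: $f_m$ is the density of $X_1+\cdots+X_m$, where the $X_i$ are independent with density $e^{x-1}$ for $x\le 1$ and $0$ for $x>1$. *)

theory Defs
  imports Complex_Main
begin

text \<open>Density f_m of a sum of m i.i.d. variables with density e^(x-1) on x \<le> 1
  (meaningful for m \<ge> 1).\<close>
definition fdens :: "nat \<Rightarrow> real \<Rightarrow> real" where
  "fdens m x = (if x \<le> real m
      then (real m - x) ^ (m - 1) / (exp (real m - x) * fact (m - 1))
      else 0)"

definition bfun :: "nat \<Rightarrow> real \<Rightarrow> real" where
  "bfun m z = (THE y. 0 \<le> y \<and> y \<le> z \<and> fdens m (1 - z) = fdens m (1 + z - y))"

end

theory Submission
  imports Defs
begin

text \<open>
  With \<open>a = m - 1\<close> one has \<open>ln f_m(1 - x) = a ln(a + x) - (a + x) - ln a!\<close>, so everything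
  reduces to Taylor expansions of \<open>ln(1 + z)\<close>. In the equation defining \<open>b = b(n+1, w)\<close> the
  quadratic terms must cancel, which gives \<open>w^2 - (w - b)^2 = O(w^3/n)\<close>.

  (i) For \<open>h \<ge> 4w\<close>, the shift by \<open>\<xi>\<close> moves \<open>ln f_h\<close> by \<open>O(w/h)\<close>, and replacing \<open>w - b\<close> by
  \<open>w\<close> moves it by \<open>O(w^3/h^2)\<close>. For \<open>h < 4w\<close> the hypothesis \<open>w^(3/2) \<le> h\<close> forces \<open>w < 16\<close>,
  and both densities are at most \<open>e^w f_h(1 - w)\<close> because \<open>t^a e^(-t)\<close> is maximal at \<open>t = a\<close>.

  (ii) For \<open>3w \<le> j \<le> w^2/4\<close>, lowering the level from \<open>j + 1\<close> to \<open>j\<close> changes \<open>ln f(1 - x)\<close>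
  by \<open>1/(2j) (1 - x^2/j) + O(w^3/j^3)\<close>, uniformly for \<open>|x| \<le> w\<close>. Telescoping from \<open>n - k\<close>
  to \<open>n\<close>, and absorbing the \<open>O(w/(n - k))\<close> effect of the shift by \<open>\<xi>\<close> into
  \<open>O(\<Sum> w^3/j^3 + w/n)\<close>, gives the expansion with all \<open>\<theta>_j\<close> equal to one \<open>\<theta>\<close>.
\<close>

lemma abs_le_power_of_deriv_bound:
  fixes g g' :: "real \<Rightarrow> real"
  assumes g0: "g 0 = 0"
    and deriv: "\<And>t. \<bar>t\<bar> \<le> r \<Longrightarrow> (g has_real_derivative g' t) (at t)"
    and bound: "\<And>t. \<bar>t\<bar> \<le> r \<Longrightarrow> \<bar>g' t\<bar> \<le> M * \<bar>t\<bar> ^ k"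
    and z: "\<bar>z\<bar> \<le> r"
  shows "\<bar>g z\<bar> \<le> M * \<bar>z\<bar> ^ Suc k"
proof (cases "z = 0")
  case True
  then show ?thesis using g0 by simp
next
  case False
  obtain c where c: "\<bar>c\<bar> \<le> \<bar>z\<bar>" "g z = z * g' c"
  proof (cases "0 < z")
    case True
    then obtain c where "0 < c" "c < z" "g z - g 0 = (z - 0) * g' c"
      using MVT2[of 0 z g g'] deriv z by force
    then show ?thesis using that[of c] g0 by simp
  next
    case False
    with \<open>z \<noteq> 0\<close> obtain c where "z < c" "c < 0" "g 0 - g z = (0 - z) * g' c"
      using MVT2[of z 0 g g'] deriv z by force
    then show ?thesis using that[of c] g0 by simp
  qed
  have "0 \<le> M * \<bar>z\<bar> ^ k"
    using bound[OF z] abs_ge_zero[of "g' z"] by linarith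
  moreover have "0 < \<bar>z\<bar> ^ k"
    using False by simp
  ultimately have M: "0 \<le> M"
    by (smt (verit) mult_neg_pos)
  have "\<bar>g z\<bar> = \<bar>z\<bar> * \<bar>g' c\<bar>"
    using c by (simp add: abs_mult)
  also have "\<dots> \<le> \<bar>z\<bar> * (M * \<bar>c\<bar> ^ k)"
    using bound[of c] c z by (intro mult_left_mono) auto
  also have "\<dots> \<le> \<bar>z\<bar> * (M * \<bar>z\<bar> ^ k)"
    using c M by (intro mult_left_mono power_mono) auto
  finally show ?thesis
    by (simp add: mult_ac)
qed

lemma abs_ln_one_plus_x_taylor2_bound:
  fixes x :: real
  assumes "\<bar>x\<bar> \<le> 1/2"
  shows "\<bar>ln (1 + x) - x + x^2/2\<bar> \<le> 2 * \<bar>x\<bar>^3"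
proof -
  have "\<bar>(\<lambda>t. ln (1 + t) - t + t^2/2) x\<bar> \<le> 2 * \<bar>x\<bar> ^ Suc 2"
  proof (rule abs_le_power_of_deriv_bound[where g' = "\<lambda>t. t^2 / (1 + t)" and r = "1/2"])
    fix t :: real
    assume t: "\<bar>t\<bar> \<le> 1/2"
    then have pos: "0 < 1 + t" by auto
    then show "((\<lambda>t. ln (1 + t) - t + t^2/2) has_real_derivative t^2 / (1 + t)) (at t)"
      by (auto intro!: derivative_eq_intros simp: field_simps power2_eq_square)
    have "\<bar>t^2 / (1 + t)\<bar> = t^2 / (1 + t)"
      using pos by simp
    also have "\<dots> \<le> t^2 / (1/2)"
      using t pos by (intro divide_left_mono) auto
    finally show "\<bar>t^2 / (1 + t)\<bar> \<le> 2 * \<bar>t\<bar>^2" by simp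
  qed (use assms in auto)
  then show ?thesis by simp
qed

lemma abs_ln_one_plus_x_taylor3_bound:
  fixes x :: real
  assumes "\<bar>x\<bar> \<le> 1/2"
  shows "\<bar>ln (1 + x) - x + x^2/2 - x^3/3\<bar> \<le> 2 * \<bar>x\<bar>^4"
proof -
  have "\<bar>(\<lambda>t. ln (1 + t) - t + t^2/2 - t^3/3) x\<bar> \<le> 2 * \<bar>x\<bar> ^ Suc 3"
  proof (rule abs_le_power_of_deriv_bound[where g' = "\<lambda>t. - (t^3 / (1 + t))" and r = "1/2"])
    fix t :: real
    assume t: "\<bar>t\<bar> \<le> 1/2"
    then have pos: "0 < 1 + t" by auto
    then show "((\<lambda>t. ln (1 + t) - t + t^2/2 - t^3/3) has_real_derivative - (t^3 / (1 + t))) (at t)"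
      by (auto intro!: derivative_eq_intros simp: field_simps power2_eq_square power3_eq_cube)
    have "\<bar>- (t^3 / (1 + t))\<bar> = \<bar>t\<bar>^3 / (1 + t)"
      using pos by (simp add: abs_divide power_abs)
    also have "\<dots> \<le> \<bar>t\<bar>^3 / (1/2)"
      using t pos by (intro divide_left_mono) auto
    finally show "\<bar>- (t^3 / (1 + t))\<bar> \<le> 2 * \<bar>t\<bar>^3" by simp
  qed (use assms in auto)
  then show ?thesis by simp
qed

lemma abs_exp_minus_one_le: "\<bar>exp x - 1\<bar> \<le> \<bar>x\<bar> * exp \<bar>x\<bar>"
  for x :: real
proof -
  have "\<bar>(\<lambda>t. exp t - 1) x\<bar> \<le> exp \<bar>x\<bar> * \<bar>x\<bar> ^ Suc 0"
    by (rule abs_le_power_of_deriv_bound[where g' = exp and r = "\<bar>x\<bar>"])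
      (auto intro!: derivative_eq_intros)
  then show ?thesis by (simp add: mult.commute)
qed

lemma power_mul_exp_neg_le:
  fixes t :: real
  assumes "0 \<le> t"
  shows "t ^ a * exp (- t) \<le> real a ^ a * exp (- real a)"
proof (cases "a = 0 \<or> t = 0")
  case True
  then show ?thesis using assms by (auto simp: power_0_left)
next
  case False
  then have a: "0 < real a" and t: "0 < t" using assms by auto
  have "real a * ln (t / real a) \<le> real a * (t / real a - 1)"
    using a t by (intro mult_left_mono ln_le_minus_one) auto
  then have "real a * ln t - t \<le> real a * ln (real a) - real a"
    using a t by (simp add: ln_div algebra_simps)
  then have "exp (real a * ln t - t) \<le> exp (real a * ln (real a) - real a)"
    by simp
  then show ?thesis
    using a t by (simp add: exp_diff exp_of_nat_mult exp_minus field_simps)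
qed

lemma ln_one_plus_minus_self_diff_approx:
  fixes u v :: real
  assumes v: "\<bar>v\<bar> \<le> u" and u: "u \<le> 1/2"
  shows "\<bar>(ln (1 + v) - v) - (ln (1 + u) - u) - (u^2 - v^2) / 2\<bar> \<le> 4 * u^3"
proof -
  define P where "P = ln (1 + v) - v + v^2/2"
  define Q where "Q = ln (1 + u) - u + u^2/2"
  have "\<bar>Q\<bar> \<le> 2 * \<bar>u\<bar>^3"
    unfolding Q_def using v u by (intro abs_ln_one_plus_x_taylor2_bound) simp
  moreover have "\<bar>P\<bar> \<le> 2 * \<bar>v\<bar>^3"
    unfolding P_def using v u by (intro abs_ln_one_plus_x_taylor2_bound) simp
  moreover have "\<bar>v\<bar>^3 \<le> u^3" "\<bar>u\<bar> = u"
    using v by (simp_all add: power_mono)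
  ultimately have "\<bar>P - Q\<bar> \<le> 4 * u^3"
    by linarith
  moreover have "(ln (1 + v) - v) - (ln (1 + u) - u) - (u^2 - v^2) / 2 = P - Q"
    by (simp add: P_def Q_def field_simps)
  ultimately show ?thesis
    by simp
qed

text \<open>By \<open>log_fdens_Suc_diff\<close> below, one step in the level changes \<open>log_fdens\<close> by
  \<open>ln (1 + p) + A ln (1 + q) - 1\<close> with \<open>p = x/(A+1)\<close>, \<open>q = 1/(A+x)\<close>. After second-order Taylor
  expansion in \<open>p\<close> and \<open>q\<close> and the identity \<open>p + A q - 1 = (x\<^sup>2 - x)/((A+1)(A+x))\<close>, what remains
  are the four rational terms estimated first.\<close>

context
  fixes A x :: real
  assumes A: "3 \<le> A" and x: "\<bar>x\<bar> \<le> A / 3"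
begin

lemma sq_div_shifted_prod_approx:
  "\<bar>x^2 / ((A + 1) * (A + x)) - x^2 / A^2\<bar> \<le> 2 * \<bar>x\<bar>^3 / A^3 + 3 * \<bar>x\<bar> / A^2"
proof -
  have Ax: "2 * A / 3 \<le> A + x" using x by auto
  have nz: "A \<noteq> 0" "A + 1 \<noteq> 0" "A + x \<noteq> 0" using A x by auto
  have eq: "x^2 / ((A + 1) * (A + x)) - x^2 / A^2 = - (x^2 * (A * x + A + x)) / (A^2 * ((A + 1) * (A + x)))"
    using nz by (simp add: divide_simps) (simp add: algebra_simps power2_eq_square)
  have num: "\<bar>x^2 * (A * x + A + x)\<bar> \<le> x^2 * (A * \<bar>x\<bar> + 2 * A)"
  proof -
    have "\<bar>A * x\<bar> = A * \<bar>x\<bar>" using A by (simp add: abs_mult)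
    then have "\<bar>A * x + A + x\<bar> \<le> A * \<bar>x\<bar> + 2 * A" using A x by arith
    then show ?thesis by (simp add: abs_mult mult_left_mono)
  qed
  have den: "A^2 * (A * (2 * A / 3)) \<le> A^2 * ((A + 1) * (A + x))"
    using A Ax by (intro mult_left_mono mult_mono) auto
  have "\<bar>x^2 / ((A + 1) * (A + x)) - x^2 / A^2\<bar> = \<bar>x^2 * (A * x + A + x)\<bar> / (A^2 * ((A + 1) * (A + x)))"
    unfolding eq using A Ax by (simp add: abs_divide abs_minus)
  also have "\<dots> \<le> x^2 * (A * \<bar>x\<bar> + 2 * A) / (A^2 * (A * (2 * A / 3)))"
    using num den A by (intro frac_le) auto
  also have "\<dots> = 3/2 * \<bar>x\<bar>^3 / A^3 + 3 * (\<bar>x\<bar> / A^2) * (\<bar>x\<bar> / A)"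
    using A by (simp add: field_simps power2_eq_square power3_eq_cube)
  also have "\<dots> \<le> 2 * \<bar>x\<bar>^3 / A^3 + 3 * (\<bar>x\<bar> / A^2) * 1"
    using A x by (intro add_mono mult_left_mono divide_right_mono) auto
  finally show ?thesis by simp
qed

lemma sq_div_shifted_sq_approx:
  "\<bar>x^2 / (2 * A^2) - (x / (A + 1))^2 / 2\<bar> \<le> \<bar>x\<bar> / A^2"
proof -
  have nz: "A \<noteq> 0" "A + 1 \<noteq> 0" "A + x \<noteq> 0" using A x by auto
  have eq: "x^2 / (2 * A^2) - (x / (A + 1))^2 / 2 = x^2 * (2 * A + 1) / (2 * A^2 * (A + 1)^2)"
    using nz by (simp add: divide_simps) (simp add: algebra_simps power2_eq_square)
  have "x^2 * (2 * A + 1) / (2 * A^2 * (A + 1)^2) \<le> x^2 * (3 * A) / (2 * A^2 * A^2)"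
    using A by (intro frac_le mult_left_mono mult_mono power_mono) auto
  also have "\<dots> = 3/2 * (\<bar>x\<bar> / A^2) * (\<bar>x\<bar> / A)"
    using A by (simp add: field_simps power2_eq_square)
  also have "\<dots> \<le> 3/2 * (\<bar>x\<bar> / A^2) * (1/3)"
    using A x by (intro mult_left_mono) auto
  also have "\<dots> \<le> \<bar>x\<bar> / A^2"
    using A by (simp add: field_simps)
  finally show ?thesis unfolding eq using A by simp
qed

lemma abs_div_shifted_prod_le:
  "\<bar>x / ((A + 1) * (A + x))\<bar> \<le> 3/2 * \<bar>x\<bar> / A^2"
proof -
  have Ax: "2 * A / 3 \<le> A + x" using x by auto
  have "\<bar>x / ((A + 1) * (A + x))\<bar> = \<bar>x\<bar> / ((A + 1) * (A + x))"
    using A Ax by (simp add: abs_divide)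
  also have "\<dots> \<le> \<bar>x\<bar> / (A * (2 * A / 3))"
    using A Ax by (intro divide_left_mono mult_mono) auto
  also have "\<dots> = 3/2 * \<bar>x\<bar> / A^2"
    using A by (simp add: field_simps power2_eq_square)
  finally show ?thesis .
qed

lemma inverse_shifted_sq_approx:
  "\<bar>1 / (2 * A) - A * (1 / (A + x))^2 / 2\<bar> \<le> 3 * \<bar>x\<bar> / A^2"
proof -
  have Ax: "2 * A / 3 \<le> A + x" using x by auto
  have nz: "A \<noteq> 0" "A + 1 \<noteq> 0" "A + x \<noteq> 0" using A x by auto
  have eq: "1 / (2 * A) - A * (1 / (A + x))^2 / 2 = (2 * A * x + x^2) / (2 * A * (A + x)^2)"
    using nz by (simp add: divide_simps) (simp add: algebra_simps power2_eq_square)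
  have "x^2 = \<bar>x\<bar> * \<bar>x\<bar>"
    by (simp add: power2_eq_square abs_mult[symmetric])
  also have "\<dots> \<le> \<bar>x\<bar> * (A / 3)"
    using x by (intro mult_left_mono) auto
  finally have "x^2 \<le> A * \<bar>x\<bar> / 3" by (simp add: mult.commute)
  moreover have "\<bar>2 * A * x\<bar> = 2 * A * \<bar>x\<bar>"
    using A by (simp add: abs_mult)
  ultimately have num: "\<bar>2 * A * x + x^2\<bar> \<le> 2 * A * \<bar>x\<bar> + A * \<bar>x\<bar> / 3"
    by (smt (verit) zero_le_power2)
  have den: "2 * A * (2 * A / 3)^2 \<le> 2 * A * (A + x)^2"
    using A Ax by (intro mult_left_mono power_mono) auto
  have "\<bar>1 / (2 * A) - A * (1 / (A + x))^2 / 2\<bar> = \<bar>2 * A * x + x^2\<bar> / (2 * A * (A + x)^2)"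
    unfolding eq using A Ax by (simp add: abs_divide)
  also have "\<dots> \<le> (2 * A * \<bar>x\<bar> + A * \<bar>x\<bar> / 3) / (2 * A * (2 * A / 3)^2)"
    using num den A by (intro frac_le) auto
  also have "\<dots> = 21/8 * \<bar>x\<bar> / A^2"
    using A by (simp add: field_simps power2_eq_square)
  also have "\<dots> \<le> 3 * \<bar>x\<bar> / A^2"
    using A by (intro divide_right_mono) auto
  finally show ?thesis .
qed

lemma ln_step_taylor_remainders:
  "\<bar>ln (1 + x / (A + 1)) - x / (A + 1) + (x / (A + 1))^2/2\<bar> \<le> 2 * \<bar>x\<bar>^3 / A^3"
  "\<bar>A * (ln (1 + 1 / (A + x)) - 1 / (A + x) + (1 / (A + x))^2/2)\<bar> \<le> 27/4 / A^2"
proof -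
  define p where "p = x / (A + 1)"
  define q where "q = 1 / (A + x)"
  have p: "\<bar>p\<bar> \<le> \<bar>x\<bar> / A" "\<bar>p\<bar> \<le> 1/2"
    using A x by (auto simp: p_def abs_divide field_simps)
  have q: "0 < q" "q \<le> 3 / (2 * A)" "\<bar>q\<bar> \<le> 1/2"
    using A x by (auto simp: q_def field_simps)
  have "\<bar>ln (1 + p) - p + p^2/2\<bar> \<le> 2 * \<bar>p\<bar>^3"
    by (rule abs_ln_one_plus_x_taylor2_bound[OF p(2)])
  also have "\<dots> \<le> 2 * (\<bar>x\<bar> / A)^3"
    using p by (intro mult_left_mono power_mono) auto
  finally show "\<bar>ln (1 + x / (A + 1)) - x / (A + 1) + (x / (A + 1))^2/2\<bar> \<le> 2 * \<bar>x\<bar>^3 / A^3"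
    by (simp add: p_def power_divide)
  have "\<bar>A * (ln (1 + q) - q + q^2/2)\<bar> \<le> A * (2 * \<bar>q\<bar>^3)"
    using A abs_ln_one_plus_x_taylor2_bound[OF q(3)] by (simp add: abs_mult)
  also have "\<dots> \<le> A * (2 * (3 / (2 * A))^3)"
    using A q by (intro mult_left_mono power_mono) auto
  also have "\<dots> = 27/4 / A^2"
    using A by (simp add: field_simps power2_eq_square power3_eq_cube)
  finally show "\<bar>A * (ln (1 + 1 / (A + x)) - 1 / (A + x) + (1 / (A + x))^2/2)\<bar> \<le> 27/4 / A^2"
    by (simp add: q_def)
qed

lemma ln_step_split:
  "ln (1 + x / (A + 1)) + A * ln (1 + 1 / (A + x)) - 1 + 1 / (2 * A) * (1 - x^2 / A)
     = (ln (1 + x / (A + 1)) - x / (A + 1) + (x / (A + 1))^2/2)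
       + A * (ln (1 + 1 / (A + x)) - 1 / (A + x) + (1 / (A + x))^2/2)
       + (x^2 / ((A + 1) * (A + x)) - x^2 / A^2) + (x^2 / (2 * A^2) - (x / (A + 1))^2 / 2)
       - x / ((A + 1) * (A + x)) + (1 / (2 * A) - A * (1 / (A + x))^2 / 2)"
proof -
  define p where "p = x / (A + 1)"
  define q where "q = 1 / (A + x)"
  have nz: "A \<noteq> 0" "A + 1 \<noteq> 0" "A + x \<noteq> 0" using A x by auto
  have "p + A * q - 1 = (x^2 - x) / ((A + 1) * (A + x))"
    using nz by (simp add: p_def q_def divide_simps) (simp add: algebra_simps power2_eq_square)
  then have key: "p + A * q - 1 = x^2 / ((A + 1) * (A + x)) - x / ((A + 1) * (A + x))"
    by (simp add: diff_divide_distrib)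
  have half: "1 / (2 * A) * (1 - x^2 / A) = 1 / (2 * A) - x^2 / (2 * A^2)"
    using A by (simp add: field_simps power2_eq_square)
  have twice: "x^2 / A^2 = 2 * (x^2 / (2 * A^2))"
    by simp
  have distrib: "A * (ln (1 + q) - q + q^2/2) = A * ln (1 + q) - A * q + A * q^2 / 2"
    by (simp add: algebra_simps)
  show ?thesis
    unfolding p_def[symmetric] q_def[symmetric] half distrib using key twice by linarith
qed

lemma ln_step_expansion:
  "\<bar>ln (1 + x / (A + 1)) + A * ln (1 + 1 / (A + x)) - 1 + 1 / (2 * A) * (1 - x^2 / A)\<bar>
     \<le> 10 * (\<bar>x\<bar>^3 / A^3 + (1 + \<bar>x\<bar>) / A^2)"
proof -
  have "\<bar>ln (1 + x / (A + 1)) + A * ln (1 + 1 / (A + x)) - 1 + 1 / (2 * A) * (1 - x^2 / A)\<bar>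
      \<le> 2 * \<bar>x\<bar>^3 / A^3 + 27/4 / A^2 + (2 * \<bar>x\<bar>^3 / A^3 + 3 * \<bar>x\<bar> / A^2)
        + \<bar>x\<bar> / A^2 + 3/2 * \<bar>x\<bar> / A^2 + 3 * \<bar>x\<bar> / A^2"
    unfolding ln_step_split
    using ln_step_taylor_remainders sq_div_shifted_prod_approx sq_div_shifted_sq_approx
      abs_div_shifted_prod_le inverse_shifted_sq_approx
    by (simp only: abs_le_iff) linarith
  also have "\<dots> = 4 * (\<bar>x\<bar>^3 / A^3) + 17/2 * (\<bar>x\<bar> / A^2) + 27/4 * (1 / A^2)"
    by (simp add: field_simps)
  also have "\<dots> \<le> 10 * (\<bar>x\<bar>^3 / A^3 + (1 / A^2 + \<bar>x\<bar> / A^2))"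
  proof -
    have "0 \<le> \<bar>x\<bar>^3 / A^3" "0 \<le> \<bar>x\<bar> / A^2" "0 \<le> 1 / A^2"
      using A by auto
    moreover have "4 * a + 17/2 * b + 27/4 * c \<le> 10 * (a + (c + b))"
      if "0 \<le> a" "0 \<le> b" "0 \<le> c" for a b c :: real
      using that by (simp add: algebra_simps)
    ultimately show ?thesis by blast
  qed
  finally show ?thesis
    by (simp add: add_divide_distrib)
qed

end

section \<open>The logarithm of the density\<close>

definition log_fdens :: "nat \<Rightarrow> real \<Rightarrow> real" where
  "log_fdens a x = real a * ln (real a + x) - (real a + x) - ln (fact a)"

lemma fdens_Suc_eq_exp_log_fdens:
  assumes "0 < real a + x"
  shows "fdens (Suc a) (1 - x) = exp (log_fdens a x)"
proof -
  have "exp (log_fdens a x) = (real a + x) ^ a / (exp (real a + x) * fact a)"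
    using assms by (simp add: log_fdens_def exp_diff exp_of_nat_mult)
  moreover have "1 - x \<le> real (Suc a)" "real (Suc a) - (1 - x) = real a + x"
    using assms by simp_all
  ultimately show ?thesis
    by (simp add: fdens_def)
qed

lemma log_fdens_diff_0:
  assumes "0 < a" "0 < real a + x"
  shows "log_fdens a x - log_fdens a 0 = real a * (ln (1 + x / real a) - x / real a)"
proof -
  have "1 + x / real a = (real a + x) / real a"
    using assms by (simp add: field_simps)
  then have "ln (real a + x) = ln (real a) + ln (1 + x / real a)"
    using assms by (simp add: ln_div)
  then show ?thesis
    using assms by (simp add: log_fdens_def algebra_simps)
qed

lemma log_fdens_Suc_diff:
  assumes "0 < real a + x"
  shows "log_fdens (Suc a) x - log_fdens a x
           = ln (1 + x / (real a + 1)) + real a * ln (1 + 1 / (real a + x)) - 1"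
proof -
  have "1 + x / (real a + 1) = (real a + 1 + x) / (real a + 1)"
    by (simp add: field_simps)
  then have l1: "ln (1 + x / (real a + 1)) = ln (real a + 1 + x) - ln (real a + 1)"
    using assms by (simp add: ln_div)
  have "1 + 1 / (real a + x) = (real a + 1 + x) / (real a + x)"
    using assms by (simp add: field_simps)
  then have l2: "ln (1 + 1 / (real a + x)) = ln (real a + 1 + x) - ln (real a + x)"
    using assms by (simp add: ln_div)
  have "ln (fact (Suc a)) = ln (real a + 1) + ln (fact a)"
    by (simp add: fact_Suc ln_mult add.commute)
  then show ?thesis
    unfolding log_fdens_def l1 l2 by (simp add: algebra_simps)
qed

lemma log_fdens_sq_approx:
  assumes a: "0 < a" and xy: "\<bar>y\<bar> \<le> x" "x \<le> real a / 2"
  shows "\<bar>log_fdens a y - log_fdens a x - (x^2 - y^2) / (2 * real a)\<bar> \<le> 4 * x^3 / (real a)^2"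
proof -
  define u where "u = x / real a"
  define v where "v = y / real a"
  have uv: "\<bar>v\<bar> \<le> u" "u \<le> 1/2"
    using a xy by (auto simp: u_def v_def abs_divide field_simps)
  have "log_fdens a y - log_fdens a 0 = real a * (ln (1 + v) - v)"
    using log_fdens_diff_0[of a y] a xy by (simp add: v_def)
  moreover have "log_fdens a x - log_fdens a 0 = real a * (ln (1 + u) - u)"
    using log_fdens_diff_0[of a x] a xy by (simp add: u_def)
  moreover have "(x^2 - y^2) / (2 * real a) = real a * ((u^2 - v^2) / 2)"
    using a by (simp add: u_def v_def field_simps power2_eq_square)
  ultimately have "log_fdens a y - log_fdens a x - (x^2 - y^2) / (2 * real a)
      = real a * ((ln (1 + v) - v) - (ln (1 + u) - u) - (u^2 - v^2) / 2)"
    by (simp only: right_diff_distrib)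
  also have "\<bar>\<dots>\<bar> \<le> real a * (4 * u^3)"
    using ln_one_plus_minus_self_diff_approx[OF uv] by (simp add: abs_mult mult_left_mono)
  also have "\<dots> = 4 * x^3 / (real a)^2"
    using a by (simp add: u_def field_simps power2_eq_square power3_eq_cube)
  finally show ?thesis .
qed

lemma fdens_Suc_deviation:
  assumes "0 < real a + x" "0 < real a + y" "\<bar>log_fdens a x - log_fdens a y\<bar> \<le> d"
  shows "\<bar>fdens (Suc a) (1 - x) - fdens (Suc a) (1 - y)\<bar> \<le> d * exp d * fdens (Suc a) (1 - y)"
proof -
  define D where "D = log_fdens a x - log_fdens a y"
  have "\<bar>exp D - 1\<bar> \<le> \<bar>D\<bar> * exp \<bar>D\<bar>"
    by (rule abs_exp_minus_one_le)
  also have "\<dots> \<le> d * exp d"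
    using assms(3) by (intro mult_mono) (auto simp: D_def)
  finally have "\<bar>exp D - 1\<bar> \<le> d * exp d" .
  moreover have "fdens (Suc a) (1 - x) - fdens (Suc a) (1 - y) = exp (log_fdens a y) * (exp D - 1)"
    using assms by (simp add: fdens_Suc_eq_exp_log_fdens D_def exp_diff field_simps)
  ultimately show ?thesis
    using assms by (simp add: fdens_Suc_eq_exp_log_fdens abs_mult mult_left_mono mult_ac)
qed

lemma log_fdens_has_real_derivative:
  "- real a < s \<Longrightarrow> (log_fdens a has_real_derivative real a / (real a + s) - 1) (at s)"
  unfolding log_fdens_def[abs_def]
  by (auto intro!: derivative_eq_intros simp: field_simps)

lemma log_fdens_strict_mono:
  assumes "- real a < s" "s < t" "t \<le> 0"
  shows "log_fdens a s < log_fdens a t"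
proof -
  obtain c where c: "s < c" "c < t"
      "log_fdens a t - log_fdens a s = (t - s) * (real a / (real a + c) - 1)"
    using MVT2[of s t "log_fdens a" "\<lambda>c. real a / (real a + c) - 1"]
      log_fdens_has_real_derivative assms by force
  have "1 < real a / (real a + c)"
    using c assms by (simp add: field_simps)
  then show ?thesis
    using c by (smt (verit) mult_pos_pos)
qed

lemma log_fdens_le_log_fdens_0:
  assumes "0 < a" "0 \<le> x"
  shows "log_fdens a x \<le> log_fdens a 0"
proof -
  have "ln (1 + x / real a) - x / real a \<le> 0"
    using assms ln_add_one_self_le_self[of "x / real a"] by simp
  then have "real a * (ln (1 + x / real a) - x / real a) \<le> 0"
    by (simp add: mult_nonneg_nonpos)
  then show ?thesis
    using log_fdens_diff_0[of a x] assms by simp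
qed

text \<open>The third-order term of \<open>ln (1 + u)\<close> tilts \<open>log_fdens a\<close> towards positive arguments.\<close>

lemma log_fdens_neg_le:
  assumes w: "0 < w" "w \<le> real a / 10"
  shows "log_fdens a (- w) \<le> log_fdens a w"
proof -
  define u where "u = w / real a"
  have a: "0 < a" using w by simp
  have u: "0 < u" "u \<le> 1/10"
    using w a by (auto simp: u_def field_simps)
  have "u^3/3 - u^2/2 - 2 * u^4 \<le> ln (1 + u) - u"
    using abs_ln_one_plus_x_taylor3_bound[of u] u by (simp add: abs_le_iff)
  moreover have "ln (1 + - u) + u \<le> 2 * u^4 - u^2/2 - u^3/3"
    using abs_ln_one_plus_x_taylor3_bound[of "- u"] u by (simp add: abs_le_iff)
  moreover have "u^4 \<le> u^3 * (1/10)"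
  proof -
    have "u^3 * u \<le> u^3 * (1/10)"
      using u by (intro mult_left_mono) auto
    then show ?thesis by (simp add: eval_nat_numeral)
  qed
  ultimately have "ln (1 + - u) + u \<le> ln (1 + u) - u"
    using u zero_le_power[of u 3] by linarith
  then have "real a * (ln (1 + - u) - - u) \<le> real a * (ln (1 + u) - u)"
    by (intro mult_left_mono) auto
  moreover have "log_fdens a w - log_fdens a 0 = real a * (ln (1 + u) - u)"
    using log_fdens_diff_0[of a w] a w by (simp add: u_def)
  moreover have "log_fdens a (- w) - log_fdens a 0 = real a * (ln (1 + - u) - - u)"
    using log_fdens_diff_0[of a "- w"] a w by (simp add: u_def)
  ultimately show ?thesis
    by linarith
qed

lemma log_fdens_shift_bound:
  assumes a: "3 * y \<le> real a" and y: "1 \<le> y" and x: "\<bar>x\<bar> \<le> y"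
    and \<xi>: "0 \<le> \<xi>" "\<xi> \<le> 1"
  shows "\<bar>log_fdens a (x + \<xi>) - log_fdens a x\<bar> \<le> 3 * y / real a"
proof (cases "\<xi> = 0")
  case True
  then show ?thesis using a y by simp
next
  case False
  then obtain s where s: "x < s" "s < x + \<xi>"
      "log_fdens a (x + \<xi>) - log_fdens a x = \<xi> * (real a / (real a + s) - 1)"
    using MVT2[of x "x + \<xi>" "log_fdens a" "\<lambda>s. real a / (real a + s) - 1"]
      log_fdens_has_real_derivative a x y \<xi> by force
  have s_bounds: "2 * real a / 3 \<le> real a + s" "\<bar>s\<bar> \<le> 2 * y"
    using s a x y \<xi> by auto
  have "\<bar>real a / (real a + s) - 1\<bar> = \<bar>s\<bar> / (real a + s)"
    using s_bounds a y by (simp add: field_simps abs_divide abs_minus_commute)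
  also have "\<dots> \<le> 2 * y / (2 * real a / 3)"
    using s_bounds a y by (intro frac_le) auto
  also have "\<dots> = 3 * y / real a"
    by simp
  finally have "\<xi> * \<bar>real a / (real a + s) - 1\<bar> \<le> 1 * (3 * y / real a)"
    using \<xi> by (intro mult_mono) auto
  then show ?thesis
    using s(3) \<xi> by (simp add: abs_mult)
qed

section \<open>The point b(n+1, w)\<close>

lemma bfun_Suc:
  assumes w: "0 < w" "w \<le> real n / 10"
  shows "0 \<le> bfun (Suc n) w" "bfun (Suc n) w \<le> w"
    and "log_fdens n (bfun (Suc n) w - w) = log_fdens n w"
proof -
  have nw: "w < real n" using w by linarith
  have fdens_eq_iff: "fdens (Suc n) (1 - w) = fdens (Suc n) (1 + w - y)
      \<longleftrightarrow> log_fdens n (y - w) = log_fdens n w" if "0 \<le> y" for y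
  proof -
    have "fdens (Suc n) (1 + w - y) = fdens (Suc n) (1 - (y - w))"
      by (simp add: algebra_simps)
    also have "\<dots> = exp (log_fdens n (y - w))"
      using fdens_Suc_eq_exp_log_fdens[of n "y - w"] that nw by simp
    finally have "fdens (Suc n) (1 + w - y) = exp (log_fdens n (y - w))" .
    moreover have "fdens (Suc n) (1 - w) = exp (log_fdens n w)"
      using fdens_Suc_eq_exp_log_fdens[of n w] w by simp
    ultimately show ?thesis by auto
  qed
  have "log_fdens n (0 - w) \<le> log_fdens n w" "log_fdens n w \<le> log_fdens n (w - w)"
    using log_fdens_neg_le[OF w] log_fdens_le_log_fdens_0[of n w] w by auto
  moreover have "continuous_on {0..w} (\<lambda>y. log_fdens n (y - w))"
    using nw by (auto simp: log_fdens_def intro!: continuous_intros)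
  ultimately obtain y where y: "0 \<le> y" "y \<le> w" "log_fdens n (y - w) = log_fdens n w"
    using IVT'[of "\<lambda>y. log_fdens n (y - w)" 0 "log_fdens n w" w] w by auto
  have unique: "y' = y"
    if "0 \<le> y'" "y' \<le> w" "log_fdens n (y' - w) = log_fdens n w" for y'
    using log_fdens_strict_mono[of n "y - w" "y' - w"] log_fdens_strict_mono[of n "y' - w" "y - w"]
      that y nw by (cases y y' rule: linorder_cases) auto
  have "\<exists>!y. 0 \<le> y \<and> y \<le> w \<and> fdens (Suc n) (1 - w) = fdens (Suc n) (1 + w - y)"
    using y unique fdens_eq_iff by metis
  then have "0 \<le> bfun (Suc n) w \<and> bfun (Suc n) w \<le> w
      \<and> fdens (Suc n) (1 - w) = fdens (Suc n) (1 + w - bfun (Suc n) w)"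
    unfolding bfun_def by (rule theI')
  then show "0 \<le> bfun (Suc n) w" "bfun (Suc n) w \<le> w"
    and "log_fdens n (bfun (Suc n) w - w) = log_fdens n w"
    using fdens_eq_iff by auto
qed

text \<open>The defining equation of \<open>b\<close> makes the quadratic term in \<open>log_fdens_sq_approx\<close>
  vanish up to the cubic remainder.\<close>

lemma bfun_Suc_sq_gap:
  assumes w: "0 < w" "w \<le> real n / 10"
  shows "0 \<le> w^2 - (bfun (Suc n) w - w)^2" "w^2 - (bfun (Suc n) w - w)^2 \<le> 8 * w^3 / real n"
proof -
  define b where "b = bfun (Suc n) w"
  have b: "0 \<le> b" "b \<le> w" "log_fdens n (b - w) = log_fdens n w"
    using bfun_Suc[OF w] by (simp_all add: b_def)
  have n: "0 < n" using w by simp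
  define X where "X = w^2 - (b - w)^2"
  have "X = b * (2 * w - b)"
    by (simp add: X_def algebra_simps power2_eq_square)
  then have X: "0 \<le> X"
    using b by simp
  then show "0 \<le> w^2 - (bfun (Suc n) w - w)^2"
    by (simp add: X_def b_def)
  have "X = 2 * real n * (X / (2 * real n))"
    using n by simp
  also have "\<dots> \<le> 2 * real n * (4 * w^3 / (real n)^2)"
    using log_fdens_sq_approx[of n "b - w" w] b n w X by (intro mult_left_mono) (auto simp: X_def)
  also have "\<dots> = 8 * w^3 / real n"
    using n by (simp add: power2_eq_square)
  finally show "w^2 - (bfun (Suc n) w - w)^2 \<le> 8 * w^3 / real n"
    by (simp add: X_def b_def)
qed

section \<open>Comparison at a fixed level\<close>

lemma fdens_nonneg: "0 \<le> fdens m x"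
  by (simp add: fdens_def)

lemma fdens_le_exp_mul_fdens:
  assumes h: "1 \<le> h" and w: "0 < w"
  shows "fdens h y \<le> exp w * fdens h (1 - w)"
proof (cases "y \<le> real h")
  case False
  then show ?thesis
    using fdens_nonneg[of h "1 - w"] by (simp add: fdens_def)
next
  case True
  obtain a where ha: "h = Suc a" using h by (cases h) auto
  define t where "t = real h - y"
  have t: "0 \<le> t" using True by (simp add: t_def)
  have "t ^ a / exp t = t ^ a * exp (- t)"
    by (simp add: exp_minus field_simps)
  also have "\<dots> \<le> real a ^ a * exp (- real a)"
    by (rule power_mul_exp_neg_le[OF t])
  also have "\<dots> \<le> (real a + w) ^ a * exp (- real a)"
    using w by (intro mult_right_mono power_mono) auto
  also have "\<dots> = exp w * ((real a + w) ^ a / exp (real a + w))"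
    by (simp add: exp_add exp_minus field_simps)
  finally have "t ^ a / exp t / fact a \<le> exp w * ((real a + w) ^ a / exp (real a + w)) / fact a"
    by (intro divide_right_mono) auto
  then show ?thesis
    using True w by (simp add: fdens_def ha t_def field_simps)
qed

lemma log_fdens_bfun_diff_bound:
  assumes w: "0 < w" "w \<le> real n / 10" and a: "3 * w \<le> real a" "a \<le> n"
  shows "\<bar>log_fdens a (bfun (Suc n) w - w) - log_fdens a w\<bar> \<le> 8 * w^3 / (real a)^2"
proof -
  define b where "b = bfun (Suc n) w"
  have b: "0 \<le> b" "b \<le> w"
    using bfun_Suc[OF w] by (simp_all add: b_def)
  have a0: "0 < a" using a w by simp
  have gap: "0 \<le> w^2 - (b - w)^2" "w^2 - (b - w)^2 \<le> 8 * w^3 / real a"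
    using bfun_Suc_sq_gap[OF w] order.trans[OF _ divide_left_mono[of "real a" "real n" "8 * w^3"]] a w
    by (auto simp: b_def)
  have "\<bar>log_fdens a (b - w) - log_fdens a w\<bar> \<le> (w^2 - (b - w)^2) / (2 * real a) + 4 * w^3 / (real a)^2"
  proof -
    have "0 \<le> (w^2 - (b - w)^2) / (2 * real a)"
      using gap(1) by simp
    moreover have "\<bar>log_fdens a (b - w) - log_fdens a w - (w^2 - (b - w)^2) / (2 * real a)\<bar>
        \<le> 4 * w^3 / (real a)^2"
      using log_fdens_sq_approx[of a "b - w" w] a0 a b by simp
    ultimately show ?thesis
      by linarith
  qed
  also have "\<dots> \<le> (8 * w^3 / real a) / (2 * real a) + 4 * w^3 / (real a)^2"
    using gap a0 by (intro add_mono divide_right_mono) auto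
  also have "\<dots> = 8 * w^3 / (real a)^2"
    using a0 by (simp add: field_simps power2_eq_square)
  finally show ?thesis
    by (simp add: b_def)
qed

lemma fdens_diff_small_level:
  assumes h: "1 \<le> h" "real h < 4 * w" and w: "0 < w" "w < 16"
  shows "\<bar>fdens h y - fdens h y'\<bar> \<le> 8 * exp 16 * (w / real h) * fdens h (1 - w)"
proof -
  define F where "F = fdens h (1 - w)"
  have "exp w * F \<le> exp 16 * F"
    using w fdens_nonneg[of h "1 - w"] by (intro mult_right_mono) (auto simp: F_def)
  then have "\<bar>fdens h y - fdens h y'\<bar> \<le> 2 * exp 16 * F"
    using fdens_le_exp_mul_fdens[OF h(1) w(1), of y] fdens_le_exp_mul_fdens[OF h(1) w(1), of y']
      fdens_nonneg[of h y] fdens_nonneg[of h y'] by (simp add: F_def abs_le_iff)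
  also have "\<dots> \<le> 2 * exp 16 * F * (4 * (w / real h))"
  proof -
    have "1 \<le> 4 * (w / real h)"
      using h by (simp add: field_simps)
    then have "2 * exp 16 * F * 1 \<le> 2 * exp 16 * F * (4 * (w / real h))"
      by (rule mult_left_mono) (simp add: F_def fdens_nonneg)
    then show ?thesis
      by simp
  qed
  finally show ?thesis
    by (simp add: F_def mult_ac)
qed

lemma fdens_diff_large_level:
  assumes w: "1 \<le> w" "w \<le> real n / 10"
    and h: "4 * w \<le> real h" "h \<le> n" "w^3 \<le> (real h)^2"
    and \<xi>: "0 \<le> \<xi>" "\<xi> \<le> 1"
  shows "\<bar>fdens h (1 + w - bfun (Suc n) w - \<xi>) - fdens h (1 - w - \<xi>)\<bar>
           \<le> 64 * exp 64 * (w / real h + w^3 / (real h)^2) * fdens h (1 - w)"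
proof -
  define b where "b = bfun (Suc n) w"
  define r where "r = w / real h + w^3 / (real h)^2"
  define F where "F = fdens h (1 - w)"
  obtain a where ha: "h = Suc a"
    using h w by (cases h) auto
  have a: "3 * w \<le> real a" "real h / 2 \<le> real a" "a \<le> n" "0 < real a"
    using h w by (auto simp: ha)
  have b: "0 \<le> b" "b \<le> w"
    using bfun_Suc w by (simp_all add: b_def)
  have "w / real h \<le> 1" "w^3 / (real h)^2 \<le> 1" "0 \<le> w / real h" "0 \<le> w^3 / (real h)^2"
    using h w by (simp_all add: divide_le_eq_1)
  then have r: "0 \<le> r" "r \<le> 2" "w / real h \<le> r"
    unfolding r_def by linarith+
  have "3 * w / real a \<le> 3 * w / (real h / 2)"
    using a h w by (intro divide_left_mono) auto
  then have shift: "3 * w / real a \<le> 6 * (w / real h)"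
    by simp
  have "8 * w^3 / (real a)^2 \<le> 8 * w^3 / (real h / 2)^2"
    using a h w by (intro divide_left_mono power_mono) auto
  then have level: "8 * w^3 / (real a)^2 \<le> 32 * (w^3 / (real h)^2)"
    by (simp add: field_simps power2_eq_square)
  have "\<bar>log_fdens a (b - w + \<xi>) - log_fdens a w\<bar> \<le> 32 * r"
    using log_fdens_shift_bound[of w a "b - w" \<xi>] log_fdens_bfun_diff_bound[of w n a]
      shift level a b w \<xi> by (simp add: b_def r_def abs_le_iff)
  then have dev_b: "\<bar>fdens h (1 - (b - w + \<xi>)) - F\<bar> \<le> 32 * r * exp (32 * r) * F"
    using fdens_Suc_deviation[of a "b - w + \<xi>" w] a b w \<xi> by (simp add: F_def ha)
  have "\<bar>log_fdens a (w + \<xi>) - log_fdens a w\<bar> \<le> 32 * r"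
    using log_fdens_shift_bound[of w a w \<xi>] shift r a w \<xi> by simp
  then have dev_w: "\<bar>fdens h (1 - (w + \<xi>)) - F\<bar> \<le> 32 * r * exp (32 * r) * F"
    using fdens_Suc_deviation[of a "w + \<xi>" w] a w \<xi> by (simp add: F_def ha)
  have "32 * r * exp (32 * r) * F \<le> 32 * r * exp 64 * F"
    using r fdens_nonneg[of h "1 - w"] by (intro mult_right_mono mult_left_mono) (auto simp: F_def)
  with dev_b dev_w have "\<bar>fdens h (1 - (b - w + \<xi>)) - fdens h (1 - (w + \<xi>))\<bar> \<le> 2 * (32 * r * exp 64 * F)"
    by (simp add: abs_le_iff)
  then show ?thesis
    by (simp add: b_def r_def F_def algebra_simps)
qed

lemma powr_three_halves: "0 \<le> x \<Longrightarrow> x powr (3/2) = x * sqrt x"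
  for x :: real
proof -
  assume "0 \<le> x"
  have "x powr (3/2) = x powr (1 + 1/2)"
    by simp
  also have "\<dots> = x powr 1 * x powr (1/2)"
    by (rule powr_add)
  also have "\<dots> = x * sqrt x"
    using \<open>0 \<le> x\<close> by (simp add: powr_half_sqrt)
  finally show ?thesis .
qed

lemma fdens_bfun_diff_bound:
  assumes w: "1 \<le> w" "w \<le> real n / 10" and \<xi>: "0 \<le> \<xi>" "\<xi> \<le> 1"
    and h: "w powr (3/2) \<le> real h" "h \<le> n"
  shows "\<bar>fdens h (1 + w - bfun (Suc n) w - \<xi>) - fdens h (1 - w - \<xi>)\<bar>
           \<le> 64 * exp 64 * (w / real h + w^3 / (real h)^2) * fdens h (1 - w)"
proof -
  have wh: "w * sqrt w \<le> real h"
    using h w powr_three_halves[of w] by simp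
  have "w * 1 \<le> w * sqrt w"
    using w by (intro mult_left_mono) auto
  then have "w \<le> real h" "1 \<le> h"
    using wh w by linarith+
  have "w^3 = (w * sqrt w)^2"
    using w by (simp add: power2_eq_square power3_eq_cube)
  also have "\<dots> \<le> (real h)^2"
    using wh w by (intro power_mono) auto
  finally have w3: "w^3 \<le> (real h)^2" .
  show ?thesis
  proof (cases "real h < 4 * w")
    case True
    then have "w * sqrt w < w * 4"
      using wh by linarith
    then have "w < 16"
      using w real_sqrt_less_iff[of w 16] by simp
    then have "\<bar>fdens h (1 + w - bfun (Suc n) w - \<xi>) - fdens h (1 - w - \<xi>)\<bar>
        \<le> 8 * exp 16 * (w / real h) * fdens h (1 - w)"
      using fdens_diff_small_level[OF \<open>1 \<le> h\<close> True] w by simp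
    also have "\<dots> \<le> 64 * exp 64 * (w / real h + w^3 / (real h)^2) * fdens h (1 - w)"
      using w \<open>1 \<le> h\<close> fdens_nonneg[of h "1 - w"]
      by (intro mult_right_mono mult_mono) auto
    finally show ?thesis .
  next
    case False
    then show ?thesis
      using fdens_diff_large_level w h w3 \<xi> by simp
  qed
qed

section \<open>Expansion across levels\<close>

definition level_drift :: "nat \<Rightarrow> real \<Rightarrow> real" where
  "level_drift j x = 1 / (2 * real j) * (1 - x^2 / real j)"

lemma abs_level_drift_le:
  assumes "1 \<le> w" "w \<le> real n / 10"
  shows "\<bar>level_drift n w\<bar> \<le> w / real n"
proof -
  have n: "0 < real n"
    using assms by linarith
  have "w^2 / real n \<le> w / 10" "0 \<le> w^2 / real n"
    using assms n by (simp_all add: field_simps power2_eq_square)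
  then have "\<bar>1 - w^2 / real n\<bar> \<le> 2 * w"
    unfolding abs_le_iff using assms by (intro conjI) linarith+
  then have "1 / (2 * real n) * \<bar>1 - w^2 / real n\<bar> \<le> 1 / (2 * real n) * (2 * w)"
    using n by (intro mult_left_mono) auto
  then show ?thesis
    using n by (simp add: level_drift_def abs_mult)
qed

lemma log_fdens_Suc_diff_cube_bound:
  assumes a: "3 * w \<le> real a" "4 * real a \<le> w^2" and w: "1 \<le> w" and x: "\<bar>x\<bar> \<le> w"
  shows "\<bar>log_fdens (Suc a) x - log_fdens a x + level_drift a x\<bar> \<le> 15 * (w^3 / (real a)^3)"
proof -
  define A where "A = real a"
  have A: "3 \<le> A" "\<bar>x\<bar> \<le> A / 3" "0 < real a + x"
    using a w x by (auto simp: A_def)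
  have "\<bar>log_fdens (Suc a) x - log_fdens a x + level_drift a x\<bar>
      = \<bar>ln (1 + x / (A + 1)) + A * ln (1 + 1 / (A + x)) - 1 + 1 / (2 * A) * (1 - x^2 / A)\<bar>"
    using log_fdens_Suc_diff[OF A(3)] by (simp add: level_drift_def A_def)
  also have "\<dots> \<le> 10 * (\<bar>x\<bar>^3 / A^3 + (1 + \<bar>x\<bar>) / A^2)"
    by (rule ln_step_expansion[OF A(1,2)])
  also have "\<dots> \<le> 10 * (w^3 / A^3 + (w^3 / A^3) / 2)"
  proof -
    have "(1 + \<bar>x\<bar>) / A^2 \<le> 2 * w / A^2"
      using x w by (intro divide_right_mono) auto
    also have "\<dots> = (w^3 / A^3) / 2 * (4 * A / w^2)"
      using A w by (simp add: field_simps power2_eq_square power3_eq_cube)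
    also have "\<dots> \<le> (w^3 / A^3) / 2"
      using a w A by (intro mult_left_le) (auto simp: A_def field_simps)
    finally have "(1 + \<bar>x\<bar>) / A^2 \<le> (w^3 / A^3) / 2" .
    moreover have "\<bar>x\<bar>^3 / A^3 \<le> w^3 / A^3"
      using x A by (intro divide_right_mono power_mono) auto
    ultimately show ?thesis
      by (intro mult_left_mono add_mono) auto
  qed
  also have "\<dots> = 15 * (w^3 / (real a)^3)"
    by (simp add: A_def)
  finally show ?thesis .
qed

lemma log_fdens_telescope_bound:
  assumes a0: "3 * w \<le> real a0" "a0 \<le> n" and n: "4 * real n \<le> w^2"
    and w: "1 \<le> w" and x: "\<bar>x\<bar> \<le> w"
  shows "\<bar>log_fdens n x - log_fdens a0 x + (\<Sum>j = a0..<n. level_drift j x)\<bar>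
           \<le> 15 * (\<Sum>j = a0..<n. w^3 / (real j)^3)"
proof -
  have "log_fdens n x - log_fdens a0 x + (\<Sum>j = a0..<n. level_drift j x)
      = (\<Sum>j = a0..<n. log_fdens (Suc j) x - log_fdens j x + level_drift j x)"
    using sum_Suc_diff'[OF a0(2), of "\<lambda>j. log_fdens j x"] by (simp add: sum.distrib)
  also have "\<bar>\<dots>\<bar> \<le> (\<Sum>j = a0..<n. \<bar>log_fdens (Suc j) x - log_fdens j x + level_drift j x\<bar>)"
    by (rule sum_abs)
  also have "\<dots> \<le> (\<Sum>j = a0..<n. 15 * (w^3 / (real j)^3))"
  proof (rule sum_mono)
    fix j assume "j \<in> {a0..<n}"
    then have "3 * w \<le> real j" "4 * real j \<le> w^2"
      using a0 n by auto
    then show "\<bar>log_fdens (Suc j) x - log_fdens j x + level_drift j x\<bar> \<le> 15 * (w^3 / (real j)^3)"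
      using log_fdens_Suc_diff_cube_bound w x by blast
  qed
  finally show ?thesis
    by (simp add: sum_distrib_left)
qed

lemma level_drift_sum_diff_bound:
  assumes a0: "0 < a0" and w: "0 \<le> w" and x: "0 \<le> w^2 - x^2" "w^2 - x^2 \<le> 8 * w^3 / real n"
  shows "\<bar>\<Sum>j = a0..<n. level_drift j x - level_drift j w\<bar> \<le> 4 * (\<Sum>j = a0..<n. w^3 / (real j)^3)"
proof -
  have "\<bar>\<Sum>j = a0..<n. level_drift j x - level_drift j w\<bar>
      \<le> (\<Sum>j = a0..<n. \<bar>level_drift j x - level_drift j w\<bar>)"
    by (rule sum_abs)
  also have "\<dots> \<le> (\<Sum>j = a0..<n. 4 * (w^3 / (real j)^3))"
  proof (rule sum_mono)
    fix j assume "j \<in> {a0..<n}"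
    then have j: "0 < real j" "real j \<le> real n"
      using a0 by auto
    have "\<bar>level_drift j x - level_drift j w\<bar> = (w^2 - x^2) / (2 * (real j)^2)"
      using j x by (simp add: level_drift_def field_simps power2_eq_square)
    also have "\<dots> \<le> (8 * w^3 / real j) / (2 * (real j)^2)"
      using j x w by (intro divide_right_mono order.trans[OF x(2)] divide_left_mono) auto
    also have "\<dots> = 4 * (w^3 / (real j)^3)"
      using j by (simp add: field_simps power2_eq_square power3_eq_cube)
    finally show "\<bar>level_drift j x - level_drift j w\<bar> \<le> 4 * (w^3 / (real j)^3)" .
  qed
  finally show ?thesis
    by (simp add: sum_distrib_left)
qed

text \<open>Either \<open>n \<le> 2 a\<^sub>0\<close>, or the sum has at least \<open>a\<^sub>0\<close> terms of size \<open>w\<^sup>3/(2 a\<^sub>0)\<^sup>3\<close>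
  and \<open>w\<^sup>2 \<ge> 4 n > 8 a\<^sub>0\<close>.\<close>

lemma linear_term_le_cube_sum:
  assumes a0: "0 < a0" "a0 \<le> n" and n: "4 * real n \<le> w^2" and w: "1 \<le> w"
  shows "w / real a0 \<le> 2 * ((\<Sum>j = a0..n. w^3 / (real j)^3) + w / real n)"
proof -
  have S: "0 \<le> (\<Sum>j = a0..n. w^3 / (real j)^3)"
    using w by (intro sum_nonneg) auto
  show ?thesis
  proof (cases "n \<le> 2 * a0")
    case True
    then have "w / real a0 \<le> 2 * (w / real n)"
      using a0 w by (simp add: field_simps)
    then show ?thesis
      using S by simp
  next
    case False
    have "real a0 * (w^3 / (real (2 * a0))^3) \<le> real (Suc a0) * (w^3 / (real (2 * a0))^3)"
      using w by (intro mult_right_mono) auto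
    also have "\<dots> = (\<Sum>j = a0..2 * a0. w^3 / (real (2 * a0))^3)"
      by simp
    also have "\<dots> \<le> (\<Sum>j = a0..2 * a0. w^3 / (real j)^3)"
      using a0 w by (intro sum_mono divide_left_mono power_mono) auto
    also have "\<dots> \<le> (\<Sum>j = a0..n. w^3 / (real j)^3)"
      using False w by (intro sum_mono2) auto
    finally have lower: "real a0 * (w^3 / (real (2 * a0))^3) \<le> (\<Sum>j = a0..n. w^3 / (real j)^3)" .
    have "w * (8 * real a0) \<le> w * w^2"
      using False n w by (intro mult_left_mono) auto
    then have "w / real a0 \<le> real a0 * (w^3 / (real (2 * a0))^3)"
      using a0 by (simp add: field_simps power2_eq_square power3_eq_cube)
    moreover have "0 \<le> w / real n"
      using w by simp
    ultimately show ?thesis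
      using lower S by (simp add: distrib_left)
  qed
qed

lemma log_fdens_level_expansion:
  assumes w: "1 \<le> w" "w \<le> real n / 10" "4 * real n \<le> w^2"
    and a0: "3 * w \<le> real a0" "a0 \<le> n"
    and x: "\<bar>x\<bar> \<le> w" "log_fdens n x = log_fdens n w"
      "0 \<le> w^2 - x^2" "w^2 - x^2 \<le> 8 * w^3 / real n"
    and \<xi>: "0 \<le> \<xi>" "\<xi> \<le> 1"
  shows "\<bar>log_fdens a0 (x + \<xi>) - log_fdens n w - (\<Sum>j = a0..n. level_drift j w)\<bar>
           \<le> 25 * ((\<Sum>j = a0..n. w^3 / (real j)^3) + w / real n)"
proof -
  define S where "S = (\<Sum>j = a0..n. w^3 / (real j)^3)"
  define T where "T = (\<Sum>j = a0..<n. w^3 / (real j)^3)"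
  have n: "0 < real n" and a00: "0 < a0"
    using w a0 by auto
  have T: "0 \<le> T" "T \<le> S"
    using w by (auto simp: S_def T_def intro!: sum_nonneg sum_mono2)
  have wn: "0 \<le> w / real n"
    using w n by simp
  have "\<bar>log_fdens a0 (x + \<xi>) - log_fdens a0 x\<bar> \<le> 3 * (w / real a0)"
    using log_fdens_shift_bound[OF a0(1) w(1) x(1) \<xi>] by simp
  also have "\<dots> \<le> 3 * (2 * (S + w / real n))"
    using linear_term_le_cube_sum[OF a00 a0(2) w(3,1)] by (simp add: S_def)
  finally have shift: "\<bar>log_fdens a0 (x + \<xi>) - log_fdens a0 x\<bar> \<le> 6 * S + 6 * (w / real n)"
    by simp
  have telescope: "\<bar>log_fdens n x - log_fdens a0 x + (\<Sum>j = a0..<n. level_drift j x)\<bar> \<le> 15 * T"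
    using log_fdens_telescope_bound[OF a0 w(3,1) x(1)] by (simp add: T_def)
  have drift: "\<bar>\<Sum>j = a0..<n. level_drift j x - level_drift j w\<bar> \<le> 4 * T"
    using level_drift_sum_diff_bound[OF a00 _ x(3,4)] w by (simp add: T_def)
  have last: "\<bar>level_drift n w\<bar> \<le> w / real n"
    using abs_level_drift_le[OF w(1,2)] .
  have "(\<Sum>j = a0..n. level_drift j w) = (\<Sum>j = a0..<n. level_drift j w) + level_drift n w"
    using a0 by (simp add: sum.atLeastLessThan_Suc atLeastLessThanSuc_atLeastAtMost[symmetric])
  moreover have "(\<Sum>j = a0..<n. level_drift j x - level_drift j w)
      = (\<Sum>j = a0..<n. level_drift j x) - (\<Sum>j = a0..<n. level_drift j w)"
    by (rule sum_subtractf)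
  ultimately have "\<bar>log_fdens a0 (x + \<xi>) - log_fdens n w - (\<Sum>j = a0..n. level_drift j w)\<bar>
      \<le> 6 * S + 6 * (w / real n) + 15 * T + 4 * T + w / real n"
    using shift telescope drift last x(2) by (simp only: abs_le_iff) linarith
  also have "\<dots> \<le> 25 * S + 25 * (w / real n)"
    using T wn by linarith
  finally show ?thesis
    by (simp add: S_def distrib_left)
qed

lemma fdens_level_eq_exp:
  assumes w: "1 \<le> w" "w \<le> real n / 10" "2 * sqrt (real n) \<le> w"
    and k: "real k \<le> real n - 3 * w" and \<xi>: "0 \<le> \<xi>" "\<xi> \<le> 1"
    and v: "v \<in> {fdens (n + 1 - k) (1 + w - bfun (n + 1) w - \<xi>), fdens (n + 1 - k) (1 - w - \<xi>)}"
  obtains E where "\<bar>E\<bar> \<le> 25 * ((\<Sum>j = n - k..n. w^3 / (real j)^3) + w / real n)"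
    and "v = fdens (n + 1) (1 - w) * exp ((\<Sum>j = n - k..n. level_drift j w) + E)"
proof -
  define a0 where "a0 = n - k"
  have a0: "3 * w \<le> real a0" "a0 \<le> n" "n + 1 - k = Suc a0"
    using k w by (auto simp: a0_def of_nat_diff)
  have n: "0 < real n" "4 * real n \<le> w^2"
    using w power_mono[OF w(3), of 2] by (auto simp: power_mult_distrib)
  obtain x where x: "\<bar>x\<bar> \<le> w" "log_fdens n x = log_fdens n w"
      "0 \<le> w^2 - x^2" "w^2 - x^2 \<le> 8 * w^3 / real n" "v = fdens (Suc a0) (1 - (x + \<xi>))"
  proof (cases "v = fdens (n + 1 - k) (1 - w - \<xi>)")
    case True
    then show ?thesis
      using that[of w] w n a0 by (simp add: algebra_simps)
  next
    case False
    then have "v = fdens (Suc a0) (1 - (bfun (Suc n) w - w + \<xi>))"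
      using v a0 by (auto simp: algebra_simps)
    then show ?thesis
      using that[of "bfun (Suc n) w - w"] bfun_Suc[of w n] bfun_Suc_sq_gap[of w n] w by simp
  qed
  have "0 < real a0 + (x + \<xi>)"
    using a0 x w \<xi> by linarith
  then have "v = exp (log_fdens n w) * exp (log_fdens a0 (x + \<xi>) - log_fdens n w)"
    using fdens_Suc_eq_exp_log_fdens x(5) by (simp flip: exp_add)
  moreover have "fdens (n + 1) (1 - w) = exp (log_fdens n w)"
    using fdens_Suc_eq_exp_log_fdens[of n w] n w by simp
  ultimately show ?thesis
    using that[of "log_fdens a0 (x + \<xi>) - log_fdens n w - (\<Sum>j = a0..n. level_drift j w)"]
      log_fdens_level_expansion[OF w(1,2) n(2) a0(1,2) x(1-4) \<xi>]
    by (simp add: a0_def)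
qed

lemma fdens_level_expansion:
  assumes C: "25 \<le> C" and w: "1 \<le> w" "w \<le> real n / 10" "2 * sqrt (real n) \<le> w"
    and k: "real k \<le> real n - 3 * w" and \<xi>: "0 \<le> \<xi>" "\<xi> \<le> 1"
    and v: "v \<in> {fdens (n + 1 - k) (1 + w - bfun (n + 1) w - \<xi>), fdens (n + 1 - k) (1 - w - \<xi>)}"
  shows "\<exists>(\<theta>s::nat \<Rightarrow> real) (\<theta>::real). (\<forall>j \<in> {n - k..n}. \<bar>\<theta>s j\<bar> \<le> 1) \<and> \<bar>\<theta>\<bar> \<le> 1 \<and>
          v = fdens (n + 1) (1 - w) *
              exp ((\<Sum>j = n - k..n. 1 / (2 * real j) * (1 - w\<^sup>2 / real j)
                         + \<theta>s j * C * w ^ 3 / (real j) ^ 3)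
                   + \<theta> * C * w / real n)"
proof -
  define S where "S = (\<Sum>j = n - k..n. w^3 / (real j)^3)"
  obtain E where E: "\<bar>E\<bar> \<le> 25 * (S + w / real n)"
    and v_eq: "v = fdens (n + 1) (1 - w) * exp ((\<Sum>j = n - k..n. level_drift j w) + E)"
    using fdens_level_eq_exp[OF w k \<xi> v] by (auto simp: S_def)
  have "0 \<le> S"
    using w by (auto simp: S_def intro!: sum_nonneg)
  moreover have "0 < w / real n"
    using w by simp
  ultimately have S: "0 < S + w / real n"
    by simp
  then have CS: "0 < C * (S + w / real n)"
    using C by simp
  have "\<bar>E\<bar> \<le> C * (S + w / real n)"
    using E mult_right_mono[OF C, of "S + w / real n"] S by linarith
  define \<theta> where "\<theta> = E / (C * (S + w / real n))"
  have "\<bar>\<theta>\<bar> \<le> 1"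
    using \<open>\<bar>E\<bar> \<le> C * (S + w / real n)\<close> CS by (simp add: \<theta>_def abs_divide)
  have "\<theta> * C * S + \<theta> * C * w / real n = \<theta> * (C * (S + w / real n))"
    by (simp add: algebra_simps)
  also have "\<dots> = E"
    using CS by (metis \<theta>_def nonzero_eq_divide_eq order_less_irrefl)
  finally have "(\<Sum>j = n - k..n. 1 / (2 * real j) * (1 - w\<^sup>2 / real j) + \<theta> * C * w ^ 3 / (real j) ^ 3)
      + \<theta> * C * w / real n = (\<Sum>j = n - k..n. level_drift j w) + E"
    by (simp add: S_def level_drift_def sum.distrib sum_distrib_left mult_ac)
  then show ?thesis
    using v_eq \<open>\<bar>\<theta>\<bar> \<le> 1\<close> by (intro exI[of _ "\<lambda>_. \<theta>"] exI[of _ \<theta>]) auto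
qed

theorem lemma7:
  shows "\<exists>C::real. C > 0 \<and>
    (\<forall>(n::nat) (w::real) (b::real) (\<xi>::real).
       n \<ge> 100 \<and> 1 \<le> w \<and> w \<le> real n / 10 \<and> b = bfun (n + 1) w \<and> 0 \<le> \<xi> \<and> \<xi> \<le> 1 \<longrightarrow>
       (\<forall>h::nat. w powr (3/2) \<le> real h \<and> h \<le> n \<longrightarrow>
          \<bar>fdens h (1 + w - b - \<xi>) - fdens h (1 - w - \<xi>)\<bar>
            \<le> C * (w / real h + w ^ 3 / (real h)\<^sup>2) * fdens h (1 - w)) \<and>
       (2 * sqrt (real n) \<le> w \<longrightarrow>
          (\<forall>k::nat. 1 \<le> k \<and> real k \<le> real n - 3 * w \<longrightarrow>
             (\<forall>v \<in> {fdens (n + 1 - k) (1 + w - b - \<xi>), fdens (n + 1 - k) (1 - w - \<xi>)}.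
                \<exists>(\<theta>s::nat \<Rightarrow> real) (\<theta>::real).
                  (\<forall>j \<in> {n - k..n}. \<bar>\<theta>s j\<bar> \<le> 1) \<and> \<bar>\<theta>\<bar> \<le> 1 \<and>
                  v = fdens (n + 1) (1 - w) *
                      exp ((\<Sum>j = n - k..n. 1 / (2 * real j) * (1 - w\<^sup>2 / real j)
                                 + \<theta>s j * C * w ^ 3 / (real j) ^ 3)
                           + \<theta> * C * w / real n)))))"
proof -
  have C: "25 \<le> 64 * exp (64::real)"
    using exp_ge_add_one_self[of 64] by linarith
  show ?thesis
    by (rule exI[of _ "64 * exp 64"])
      (use fdens_bfun_diff_bound fdens_level_expansion[OF C] in fastforce)
qed

end
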